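(* Let $g\ge1$, $\Gamma\subset\mathrm{Sp}_{2g}(\mathbb Z)$ a congruence subgroup, $\mathcal A$ a finite-dimensional complex unital algebra, $e\in\mathbb C\setminus\{0\}$, $N\ne0$, and $\Phi:\mathbb H_g\to\mathcal A$ meromorphic with $\Phi(\gamma\cdot Z)=\det(J(\gamma,Z))^N\Phi(Z)$ for all $\gamma\in\Gamma$, pointwise invertible on a Zariski-open subset of $\mathbb H_g$. Then on that locus $A_\Phi:=\frac{2e}{N}\Phi^{-1}D(\Phi)$ (a symmetric $g\times g$ matrix with entries in $\mathcal A$) satisfies $$A_\Phi(\gamma\cdot Z)=J(\gamma,Z)A_\Phi(Z)J(\gamma,Z)^t+\frac{2e}{2\pi i}J(\gamma,Z)C^t\qquad\text{for all }\gamma=\begin{pmatrix}A_\gamma&B\\C&D\end{pmatrix}\in\Gamma.$$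
   Context: $\mathbb H_g=\{Z\in\mathrm{Mat}_g(\mathbb C):Z^t=Z,\ \mathrm{Im}Z>0\}$, $\gamma\cdot Z=(A_\gamma Z+B)(CZ+D)^{-1}$, $J(\gamma,Z)=CZ+D$. $D=\frac1{2\pi i}\frac{\partial}{\partial Z}$ is the symmetric matrix of operators with diagonal entries $\frac1{2\pi i}\partial/\partial Z_{ii}$ and off-diagonal entries $\frac1{2\pi i}\cdot\frac12\partial/\partial Z_{ij}$, applied entrywise; $\Phi^{-1}D(\Phi)$ means left multiplication of each entry by $\Phi^{-1}$. *)

theory Defs
  imports "HOL-Analysis.Analysis"
begin

text \<open>Genus g is encoded by a finite index type 'g (so g = CARD('g) \<ge> 1).
  Matrices in Mat_g(C) are complex^'g^'g; elements of Sp_2g(Z) are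
  integer (2g x 2g)-matrices indexed by 'g + 'g (first copy = first g coordinates).\<close>

definition sym_mats :: "(complex^'g::finite^'g) set" where
  "sym_mats = {Z. transpose Z = Z}"

definition Im_mat :: "complex^'g::finite^'g \<Rightarrow> real^'g^'g" where
  "Im_mat Z = (\<chi> i j. Im (Z$i$j))"

definition pos_def :: "real^'g::finite^'g \<Rightarrow> bool" where
  "pos_def M \<longleftrightarrow> (\<forall>x::real^'g. x \<noteq> 0 \<longrightarrow> x \<bullet> (M *v x) > 0)"

definition siegel_H :: "(complex^'g::finite^'g) set" where
  "siegel_H = {Z. transpose Z = Z \<and> pos_def (Im_mat Z)}"

definition Omega :: "int^('g::finite+'g)^('g+'g)" where
  "Omega = (\<chi> p q. case (p, q) of
       (Inl i, Inr j) \<Rightarrow> (if i = j then 1 else 0)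
     | (Inr i, Inl j) \<Rightarrow> (if i = j then -1 else 0)
     | _ \<Rightarrow> 0)"

definition Sp_Z :: "(int^('g::finite+'g)^('g+'g)) set" where
  "Sp_Z = {M. transpose M ** Omega ** M = Omega}"

definition Gamma_principal :: "nat \<Rightarrow> (int^('g::finite+'g)^('g+'g)) set" where
  "Gamma_principal n = {M \<in> Sp_Z. \<forall>p q. M$p$q mod int n = (if p = q then 1 else 0) mod int n}"

definition is_subgroup_Sp :: "(int^('g::finite+'g)^('g+'g)) set \<Rightarrow> bool" where
  "is_subgroup_Sp G \<longleftrightarrow> G \<subseteq> Sp_Z \<and> mat 1 \<in> G \<and>
     (\<forall>x\<in>G. \<forall>y\<in>G. x ** y \<in> G) \<and> (\<forall>x\<in>G. \<exists>y\<in>G. x ** y = mat 1 \<and> y ** x = mat 1)"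

definition congruence_subgroup :: "(int^('g::finite+'g)^('g+'g)) set \<Rightarrow> bool" where
  "congruence_subgroup G \<longleftrightarrow> is_subgroup_Sp G \<and> (\<exists>n>0. Gamma_principal n \<subseteq> G)"

definition blkA :: "int^('g::finite+'g)^('g+'g) \<Rightarrow> complex^'g^'g" where
  "blkA M = (\<chi> i j. of_int (M $ Inl i $ Inl j))"
definition blkB :: "int^('g::finite+'g)^('g+'g) \<Rightarrow> complex^'g^'g" where
  "blkB M = (\<chi> i j. of_int (M $ Inl i $ Inr j))"
definition blkC :: "int^('g::finite+'g)^('g+'g) \<Rightarrow> complex^'g^'g" where
  "blkC M = (\<chi> i j. of_int (M $ Inr i $ Inl j))"
definition blkD :: "int^('g::finite+'g)^('g+'g) \<Rightarrow> complex^'g^'g" where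
  "blkD M = (\<chi> i j. of_int (M $ Inr i $ Inr j))"

definition Jfac :: "int^('g::finite+'g)^('g+'g) \<Rightarrow> complex^'g^'g \<Rightarrow> complex^'g^'g" where
  "Jfac M Z = blkC M ** Z + blkD M"

definition sp_act :: "int^('g::finite+'g)^('g+'g) \<Rightarrow> complex^'g^'g \<Rightarrow> complex^'g^'g" where
  "sp_act M Z = (blkA M ** Z + blkB M) ** matrix_inv (Jfac M Z)"

text \<open>A finite-dimensional complex unital algebra is modelled as a real normed unital
  algebra 'a (any norm; all norms are equivalent in finite dimension) which is finite-dimensional
  over R, together with the structure map iota : C -> A, a unital ring homomorphism into the
  centre extending the real structure.  Complex scalar multiplication is c.a = iota c * a.\<close>

definition complex_alg_struct :: "(complex \<Rightarrow> 'a::real_normed_algebra_1) \<Rightarrow> bool" where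
  "complex_alg_struct \<iota> \<longleftrightarrow>
     (\<forall>z w. \<iota> (z + w) = \<iota> z + \<iota> w) \<and> (\<forall>z w. \<iota> (z * w) = \<iota> z * \<iota> w) \<and>
     (\<forall>r. \<iota> (complex_of_real r) = of_real r) \<and> (\<forall>z a. \<iota> z * a = a * \<iota> z) \<and>
     (\<exists>B. finite B \<and> span B = (UNIV :: 'a set))"

definition alg_invertible :: "'a::ring_1 \<Rightarrow> bool" where
  "alg_invertible x \<longleftrightarrow> (\<exists>y. y * x = 1 \<and> x * y = 1)"

definition alg_inv :: "'a::ring_1 \<Rightarrow> 'a" where
  "alg_inv x = (THE y. y * x = 1 \<and> x * y = 1)"

definition cscale :: "complex \<Rightarrow> complex^'g::finite^'g \<Rightarrow> complex^'g^'g" where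
  "cscale c H = (\<chi> i j. c * H$i$j)"

text \<open>Holomorphy at Z of a function on (an open part of) H_g, i.e. of a function of the
  independent coordinates of a symmetric matrix: real-differentiable along symmetric matrices
  with a complex-linear derivative.\<close>
definition holo_at :: "(complex \<Rightarrow> 'a::real_normed_algebra_1) \<Rightarrow> (complex^'g::finite^'g \<Rightarrow> 'a) \<Rightarrow> complex^'g^'g \<Rightarrow> bool" where
  "holo_at \<iota> \<Phi> Z \<longleftrightarrow> (\<exists>\<Phi>'. (\<Phi> has_derivative \<Phi>') (at Z within sym_mats) \<and>
      (\<forall>c H. H \<in> sym_mats \<longrightarrow> \<Phi>' (cscale c H) = \<iota> c * \<Phi>' H))"

text \<open>E_ij + E_ji for i \<noteq> j, and E_ii for i = j: the coordinate direction of Z_ij on symmetric matrices.\<close>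
definition symE :: "'g::finite \<Rightarrow> 'g \<Rightarrow> complex^'g^'g" where
  "symE i j = (\<chi> k l. if (k = i \<and> l = j) \<or> (k = j \<and> l = i) then 1 else 0)"

definition partial_Z :: "(complex^'g::finite^'g \<Rightarrow> 'a::real_normed_vector) \<Rightarrow> complex^'g^'g \<Rightarrow> 'g \<Rightarrow> 'g \<Rightarrow> 'a" where
  "partial_Z \<Phi> Z i j = Lim (at (0::real)) (\<lambda>t. (1 / t) *\<^sub>R (\<Phi> (Z + t *\<^sub>R symE i j) - \<Phi> Z))"

text \<open>D = (1/(2 pi i)) d/dZ: diagonal entries (1/2pi i) d/dZ_ii, off-diagonal (1/2pi i)(1/2) d/dZ_ij.\<close>
definition Dop :: "(complex \<Rightarrow> 'a::real_normed_algebra_1) \<Rightarrow> (complex^'g::finite^'g \<Rightarrow> 'a) \<Rightarrow> complex^'g^'g \<Rightarrow> 'a^'g^'g" where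
  "Dop \<iota> \<Phi> Z = (\<chi> i j. if i = j then \<iota> (1 / (2 * pi * \<i>)) * partial_Z \<Phi> Z i i
                          else \<iota> (1 / (2 * pi * \<i>)) * \<iota> (1/2) * partial_Z \<Phi> Z i j)"

definition A_Phi :: "(complex \<Rightarrow> 'a::real_normed_algebra_1) \<Rightarrow> complex \<Rightarrow> int \<Rightarrow> (complex^'g::finite^'g \<Rightarrow> 'a) \<Rightarrow> complex^'g^'g \<Rightarrow> 'a^'g^'g" where
  "A_Phi \<iota> e N \<Phi> Z = (\<chi> i j. \<iota> (2 * e / of_int N) * (alg_inv (\<Phi> Z) * Dop \<iota> \<Phi> Z $ i $ j))"

end

theory Submission
  imports Defs
begin

text \<open>
  Fix \<gamma> = (A B; C D) in \<Gamma>, a point Z with W = \<gamma>\<cdot>Z, and J = CZ + D.  For a symmetric V put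
  H = J^t V J and differentiate the automorphy relation \<Phi>(\<gamma>\<cdot>Y) = det(J(\<gamma>,Y))^N \<Phi>(Y) along the
  line Y = Z + tH.  Since W J = AZ + B, the curve \<gamma>\<cdot>(Z + tH) has velocity (A - WC) H J^-1, and the
  symplectic relations give (A - WC) J^t = 1, so this velocity is V.  The factor of automorphy
  det(J + tCH)^N has derivative N det(J)^N tr(J^-1 C H) = N det(J)^N tr(C J^t V).  Hence
  \<Phi>'(W) V = det(J)^N \<Phi>'(Z)(J^t V J) + N det(J)^N tr(C J^t V) \<Phi>(Z).
  Taking V = (E_ij + E_ji)/2 turns the left side into 2\<pi>i D(\<Phi>)(W)_ij and the first term into
  det(J)^N \<Sum> J_ik J_jl 2\<pi>i D(\<Phi>)(Z)_kl, while the trace becomes (J C^t)_ij because J C^t is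
  symmetric.  Multiplying by (2e/N) \<Phi>(W)^-1 = (2e/N) det(J)^-N \<Phi>(Z)^-1, which is legitimate
  because the structure map is central, gives the transformation law.
\<close>

lemma matrix_add_rdistrib: "(B + C) ** (A::'a::semiring_1^'n^'m) = B ** A + C ** A"
  by (simp add: vec_eq_iff matrix_matrix_mult_def sum.distrib algebra_simps)

lemma matrix_diff_rdistrib: "(B - C) ** (A::'a::ring_1^'n^'m) = B ** A - C ** A"
  by (simp add: vec_eq_iff matrix_matrix_mult_def sum_subtractf algebra_simps)

lemma matrix_diff_ldistrib: "(A::'a::ring_1^'n^'m) ** (B - C) = A ** B - A ** C"
  by (simp add: vec_eq_iff matrix_matrix_mult_def sum_subtractf algebra_simps)

lemma transpose_add: "transpose (X + Y) = transpose X + transpose (Y::'a::semiring_1^'n^'m)"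
  by (simp add: vec_eq_iff transpose_def)

lemma matrix_inv_det_nonzero:
  fixes J :: "'a::field^'n::finite^'n"
  assumes "det J \<noteq> 0"
  shows "J ** matrix_inv J = mat 1" and "matrix_inv J ** J = mat 1"
proof -
  obtain J' where "J ** J' = mat 1 \<and> J' ** J = mat 1"
    using assms invertible_det_nz unfolding invertible_def by blast
  hence "J ** matrix_inv J = mat 1 \<and> matrix_inv J ** J = mat 1"
    unfolding matrix_inv_def by (rule someI)
  thus "J ** matrix_inv J = mat 1" "matrix_inv J ** J = mat 1" by auto
qed

lemma matrix_inv_nth_cramer:
  fixes M :: "'a::field^'n::finite^'n"
  assumes "det M \<noteq> 0"
  shows "matrix_inv M $ k $ l = det (\<chi> i j. if j = k then (if i = l then 1 else 0) else M $ i $ j) / det M"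
proof -
  let ?b = "\<chi> i. if i = l then 1 else (0::'a)"
  have "M *v (\<chi> k. matrix_inv M $ k $ l) = (M ** matrix_inv M) *v ?b"
    by (simp add: vec_eq_iff matrix_vector_mult_def matrix_matrix_mult_def if_distrib if_distribR
        sum_distrib_left cong: if_cong)
  also have "\<dots> = ?b" using matrix_inv_det_nonzero[OF assms] by simp
  finally have "(\<chi> k. matrix_inv M $ k $ l) = (\<chi> k. det (\<chi> i j. if j = k then ?b $ i else M $ i $ j) / det M)"
    using cramer[OF assms] by blast
  hence "(\<chi> k. matrix_inv M $ k $ l) $ k = (\<chi> k. det (\<chi> i j. if j = k then ?b $ i else M $ i $ j) / det M) $ k"
    by simp
  thus ?thesis by (simp only: vec_lambda_beta)
qed

lemma tendsto_det:
  fixes f :: "'b \<Rightarrow> 'a::{real_normed_field}^'n::finite^'n"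
  assumes "(f \<longlongrightarrow> A) F"
  shows "((\<lambda>x. det (f x)) \<longlongrightarrow> det A) F"
  unfolding det_def using assms by (intro tendsto_intros)

lemma tendsto_matrix_inv:
  fixes f :: "'b \<Rightarrow> 'a::real_normed_field^'n::finite^'n"
  assumes "(f \<longlongrightarrow> A) F" and "det A \<noteq> 0"
  shows "((\<lambda>x. matrix_inv (f x)) \<longlongrightarrow> matrix_inv A) F"
proof (rule vec_tendstoI, rule vec_tendstoI)
  fix k l
  let ?cof = "\<lambda>M :: 'a^'n^'n. det (\<chi> i j. if j = k then (if i = l then 1 else 0) else M $ i $ j)"
  have "((\<lambda>x. f x $ i $ j) \<longlongrightarrow> A $ i $ j) F" for i j
    by (intro tendsto_vec_nth assms(1))
  hence "((\<lambda>x. ?cof (f x) / det (f x)) \<longlongrightarrow> ?cof A / det A) F"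
    using assms by (intro tendsto_intros tendsto_det) auto
  moreover have "\<forall>\<^sub>F x in F. ?cof (f x) / det (f x) = matrix_inv (f x) $ k $ l"
    using tendsto_imp_eventually_ne[OF tendsto_det[OF assms(1)] assms(2)]
    by eventually_elim (simp add: matrix_inv_nth_cramer)
  ultimately show "((\<lambda>x. matrix_inv (f x) $ k $ l) \<longlongrightarrow> matrix_inv A $ k $ l) F"
    using Lim_transform_eventually matrix_inv_nth_cramer[OF assms(2)] by fastforce
qed

lemma tendsto_matrix_mult_left:
  fixes f :: "'b \<Rightarrow> 'a::real_normed_algebra_1^'n::finite^'m::finite"
  assumes "(f \<longlongrightarrow> L) F"
  shows "((\<lambda>x. A ** f x) \<longlongrightarrow> A ** L) F"
  unfolding matrix_matrix_mult_def using assms by (intro tendsto_intros)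

lemma permutes_nonid_moves_other_point:
  assumes "p permutes (UNIV::'n::finite set)" and "p \<noteq> id"
  shows "\<exists>j. j \<noteq> i \<and> p j \<noteq> j"
proof -
  obtain k where k: "p k \<noteq> k" using assms(2) by (auto simp: fun_eq_iff)
  show ?thesis
  proof (cases "k = i")
    case True
    have "p (p i) \<noteq> p i"
      using k True permutes_inj[OF assms(1)] by (auto dest: injD)
    thus ?thesis using k True by metis
  qed (use k in blast)
qed

lemma det_identity_line_has_vector_derivative:
  fixes M :: "'a::real_normed_field^'n::finite^'n"
  shows "((\<lambda>t. det (mat 1 + t *\<^sub>R M)) has_vector_derivative trace M) (at 0)"
proof -
  let ?P = "{p. p permutes (UNIV::'n set)}"
  let ?D = "\<lambda>p s. (\<Sum>i\<in>UNIV. s *\<^sub>R M $ i $ p i * (\<Prod>j\<in>UNIV - {i}. (mat 1 + 0 *\<^sub>R M) $ j $ p j))"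
  have "((\<lambda>t. (mat 1 + t *\<^sub>R M) $ i $ j) has_derivative (\<lambda>s. s *\<^sub>R M $ i $ j)) (at 0)" for i j
    by (auto intro!: derivative_eq_intros)
  hence D: "((\<lambda>t. det (mat 1 + t *\<^sub>R M)) has_derivative
      (\<lambda>s. \<Sum>p\<in>?P. of_int (sign p) * ?D p s)) (at 0)"
    unfolding det_def by (intro has_derivative_sum has_derivative_mult_right has_derivative_prod)
  \<comment> \<open>Only the identity permutation contributes, since any other one moves a second point.\<close>
  have "?D p s = 0" if p: "p \<in> ?P - {id}" for p s
  proof (rule sum.neutral, rule ballI)
    fix i
    obtain j where "j \<noteq> i" "p j \<noteq> j"
      using permutes_nonid_moves_other_point[of p i] p by auto
    hence "(\<Prod>j\<in>UNIV - {i}. (mat 1 + 0 *\<^sub>R M) $ j $ p j) = 0"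
      by (intro prod_zero) (auto simp: mat_def intro!: bexI[of _ j])
    thus "s *\<^sub>R M $ i $ p i * (\<Prod>j\<in>UNIV - {i}. (mat 1 + 0 *\<^sub>R M) $ j $ p j) = 0" by simp
  qed
  moreover have "id \<in> ?P" by simp
  ultimately have "(\<Sum>p\<in>?P. of_int (sign p) * ?D p s) = of_int (sign id) * ?D id s" for s
    using sum.remove[OF finite_permutations[OF finite_class.finite_UNIV], of id "\<lambda>p. of_int (sign p) * ?D p s"]
    by simp
  also have "of_int (sign id) * ?D id s = s *\<^sub>R trace M" for s
    by (simp add: mat_def trace_def scaleR_sum_right)
  finally show ?thesis
    using D by (simp add: has_vector_derivative_def)
qed

lemma det_line_has_vector_derivative:
  fixes J K :: "'a::real_normed_field^'n::finite^'n"
  assumes "det J \<noteq> 0"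
  shows "((\<lambda>t. det (J + t *\<^sub>R K)) has_vector_derivative det J * trace (matrix_inv J ** K)) (at 0)"
proof -
  have eq: "J + t *\<^sub>R K = J ** (mat 1 + t *\<^sub>R (matrix_inv J ** K))" for t
    by (simp add: matrix_add_ldistrib matrix_scalar_ac scalar_matrix_assoc[symmetric]
        matrix_mul_assoc matrix_inv_det_nonzero[OF assms])
  show ?thesis
    unfolding eq det_mul
    by (intro has_vector_derivative_mult_right det_identity_line_has_vector_derivative)
qed

lemma det_powi_line_has_vector_derivative:
  fixes J K :: "complex^'n::finite^'n"
  assumes "det J \<noteq> 0"
  shows "((\<lambda>t. det (J + t *\<^sub>R K) powi N) has_vector_derivative
    of_int N * trace (matrix_inv J ** K) * det J powi N) (at 0)"
proof -
  have D: "((\<lambda>t. det (J + t *\<^sub>R K) powi N) has_derivative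
      (\<lambda>s. s *\<^sub>R (det J * trace (matrix_inv J ** K)) * (of_int N * det J powi (N - 1)))) (at 0)"
    using has_derivative_power_int[OF _ det_line_has_vector_derivative[OF assms,
        unfolded has_vector_derivative_def]] assms by simp
  have pow: "det J * det J powi (N - 1) = det J powi N"
    using power_int_add_1'[of "det J" "N - 1"] assms by simp
  have "s *\<^sub>R (det J * trace (matrix_inv J ** K)) * (of_int N * det J powi (N - 1)) =
      s *\<^sub>R (of_int N * trace (matrix_inv J ** K) * det J powi N)" for s
    by (simp only: flip: pow) (simp add: mult_ac)
  thus ?thesis
    unfolding has_vector_derivative_def by (intro has_derivative_eq_rhs[OF D] ext)
qed

section \<open>Symplectic matrices\<close>

lemma sum_UNIV_Plus:
  "(\<Sum>p\<in>(UNIV::('g::finite + 'g) set). f p) = (\<Sum>k\<in>UNIV. f (Inl k)) + (\<Sum>k\<in>UNIV. f (Inr k))"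
  by (subst UNIV_Plus_UNIV[symmetric], subst sum.Plus) (simp_all add: o_def)

lemma Omega_nth:
  "Omega $ Inl i $ Inl j = 0" "Omega $ Inr i $ Inr j = 0"
  "Omega $ Inl i $ Inr j = (if i = j then 1 else 0)"
  "Omega $ Inr i $ Inl j = (if i = j then -1 else 0)"
  by (simp_all add: Omega_def)

lemma transpose_mult_Omega_mult_nth:
  fixes M :: "int^('g::finite+'g)^('g+'g)"
  shows "(transpose M ** Omega ** M) $ p $ q =
    (\<Sum>k\<in>UNIV. M $ Inl k $ p * M $ Inr k $ q - M $ Inr k $ p * M $ Inl k $ q)"
  by (simp add: matrix_matrix_mult_def transpose_def sum_UNIV_Plus Omega_nth sum_distrib_right
      if_distrib if_distribR sum_subtractf sum_negf algebra_simps cong: if_cong)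

lemma mult_Omega_mult_transpose_nth:
  fixes M :: "int^('g::finite+'g)^('g+'g)"
  shows "(M ** Omega ** transpose M) $ p $ q =
    (\<Sum>k\<in>UNIV. M $ p $ Inl k * M $ q $ Inr k - M $ p $ Inr k * M $ q $ Inl k)"
  by (simp add: matrix_matrix_mult_def transpose_def sum_UNIV_Plus Omega_nth sum_distrib_right
      if_distrib if_distribR sum_subtractf sum_negf algebra_simps cong: if_cong)

lemma Omega_orthogonal_nth:
  "(Omega ** transpose Omega) $ p $ q = (mat 1 :: int^('g::finite+'g)^('g+'g)) $ p $ q"
  "(transpose Omega ** Omega) $ p $ q = (mat 1 :: int^('g::finite+'g)^('g+'g)) $ p $ q"
  unfolding matrix_matrix_mult_def transpose_def mat_def
  by (cases p; cases q; simp add: Omega_nth sum_UNIV_Plus if_distrib if_distribR cong: if_cong)+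

lemma Omega_orthogonal:
  "Omega ** transpose Omega = (mat 1 :: int^('g::finite+'g)^('g+'g))"
  "transpose Omega ** Omega = (mat 1 :: int^('g::finite+'g)^('g+'g))"
  by (simp_all add: vec_eq_iff Omega_orthogonal_nth)

lemma symplectic_transpose:
  fixes M y :: "int^('g::finite+'g)^('g+'g)"
  assumes "transpose M ** Omega ** M = Omega" and "M ** y = mat 1"
  shows "M ** Omega ** transpose M = Omega"
proof -
  have "transpose M ** Omega = Omega ** y"
    by (metis assms matrix_mul_assoc matrix_mul_rid)
  hence "transpose Omega ** transpose M ** Omega = y"
    by (metis Omega_orthogonal(2) matrix_mul_assoc matrix_mul_lid)
  hence "M ** transpose Omega ** transpose M ** Omega = mat 1"
    by (metis assms(2) matrix_mul_assoc)
  hence "M ** transpose Omega ** transpose M = transpose Omega"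
    by (metis Omega_orthogonal(1) matrix_mul_assoc matrix_mul_lid matrix_mul_rid)
  hence "transpose (M ** transpose Omega ** transpose M) = Omega"
    by simp
  thus ?thesis by (simp add: matrix_transpose_mul matrix_mul_assoc)
qed

lemma symplectic_blocks:
  fixes M y :: "int^('g::finite+'g)^('g+'g)"
  assumes "transpose M ** Omega ** M = Omega" and "M ** y = mat 1"
  shows "transpose (blkA M) ** blkC M = transpose (blkC M) ** blkA M"
    and "transpose (blkD M) ** blkA M - transpose (blkB M) ** blkC M = mat 1"
    and "blkC M ** transpose (blkD M) = blkD M ** transpose (blkC M)"
proof -
  have MtOM: "complex_of_int (Omega $ p $ q) = of_int
      (\<Sum>k\<in>UNIV. M $ Inl k $ p * M $ Inr k $ q - M $ Inr k $ p * M $ Inl k $ q)" for p q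
    using transpose_mult_Omega_mult_nth[of M p q] unfolding assms(1) by simp
  have MOMt: "complex_of_int (Omega $ p $ q) = of_int
      (\<Sum>k\<in>UNIV. M $ p $ Inl k * M $ q $ Inr k - M $ p $ Inr k * M $ q $ Inl k)" for p q
    using mult_Omega_mult_transpose_nth[of M p q] unfolding symplectic_transpose[OF assms] by simp
  show "transpose (blkA M) ** blkC M = transpose (blkC M) ** blkA M"
    unfolding vec_eq_iff
  proof (intro allI)
    fix i j
    show "(transpose (blkA M) ** blkC M) $ i $ j = (transpose (blkC M) ** blkA M) $ i $ j"
      using MtOM[of "Inl i" "Inl j"]
      by (simp add: matrix_matrix_mult_def transpose_def blkA_def blkC_def Omega_nth sum_subtractf)
  qed
  show "transpose (blkD M) ** blkA M - transpose (blkB M) ** blkC M = mat 1"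
    unfolding vec_eq_iff
  proof (intro allI)
    fix i j
    show "(transpose (blkD M) ** blkA M - transpose (blkB M) ** blkC M) $ i $ j = mat 1 $ i $ j"
      using MtOM[of "Inr i" "Inl j"]
      by (simp add: matrix_matrix_mult_def transpose_def blkA_def blkB_def blkC_def blkD_def
          Omega_nth mat_def algebra_simps sum_subtractf split: if_splits)
  qed
  show "blkC M ** transpose (blkD M) = blkD M ** transpose (blkC M)"
    unfolding vec_eq_iff
  proof (intro allI)
    fix i j
    show "(blkC M ** transpose (blkD M)) $ i $ j = (blkD M ** transpose (blkC M)) $ i $ j"
      using MOMt[of "Inr i" "Inr j"]
      by (simp add: matrix_matrix_mult_def transpose_def blkC_def blkD_def Omega_nth sum_subtractf mult.commute)
  qed
qed

lemma alg_inv_unique: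
  fixes x :: "'a::ring_1"
  assumes "y * x = 1" and "x * y = 1"
  shows "alg_inv x = y"
  unfolding alg_inv_def
proof (rule the_equality)
  show "y * x = 1 \<and> x * y = 1" using assms by simp
  fix z assume "z * x = 1 \<and> x * z = 1"
  thus "z = y" using assms by (metis mult.assoc mult_1_left)
qed

lemma alg_inv_left_right:
  fixes x :: "'a::ring_1"
  assumes "alg_invertible x"
  shows "alg_inv x * x = 1" and "x * alg_inv x = 1"
  using assms alg_inv_unique unfolding alg_invertible_def by auto

context
  fixes \<iota> :: "complex \<Rightarrow> 'a::real_normed_algebra_1"
  assumes \<iota>: "complex_alg_struct \<iota>"
begin

lemma complex_alg_struct_mult: "\<iota> (z * w) = \<iota> z * \<iota> w"
  and complex_alg_struct_central: "\<iota> z * a = a * \<iota> z"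
  and complex_alg_struct_of_real: "\<iota> (complex_of_real r) = of_real r"
  using \<iota> unfolding complex_alg_struct_def by blast+

lemma complex_alg_struct_zero: "\<iota> 0 = 0"
  and complex_alg_struct_one: "\<iota> 1 = 1"
  using complex_alg_struct_of_real[of 0] complex_alg_struct_of_real[of 1] by simp_all

lemma complex_alg_struct_bounded_linear: "bounded_linear \<iota>"
proof -
  have "linear \<iota>"
  proof
    show "\<iota> (z + w) = \<iota> z + \<iota> w" for z w
      using \<iota> unfolding complex_alg_struct_def by blast
    show "\<iota> (r *\<^sub>R z) = r *\<^sub>R \<iota> z" for r z
      by (simp add: scaleR_conv_of_real complex_alg_struct_mult complex_alg_struct_of_real)
  qed
  thus ?thesis using linear_conv_bounded_linear by blast
qed

lemma complex_alg_struct_inverse: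
  assumes "d \<noteq> 0"
  shows "\<iota> (inverse d) * \<iota> d = 1"
  using assms by (simp flip: complex_alg_struct_mult add: complex_alg_struct_one)

lemma complex_alg_struct_left_commute: "x * (\<iota> c * y) = \<iota> c * (x * y)"
  by (metis complex_alg_struct_central mult.assoc)

lemma complex_alg_struct_sandwich: "x * (\<iota> a * y * \<iota> b) = \<iota> a * (x * y) * \<iota> b"
  by (metis complex_alg_struct_central mult.assoc)

lemma alg_inv_complex_alg_struct_mult:
  assumes "d \<noteq> 0" and "alg_invertible x"
  shows "alg_inv (\<iota> d * x) = \<iota> (inverse d) * alg_inv x"
proof (rule alg_inv_unique)
  have d: "\<iota> (inverse d) * \<iota> d = 1" "\<iota> d * \<iota> (inverse d) = 1"
    using complex_alg_struct_inverse[OF assms(1)] complex_alg_struct_central by metis+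
  note x = alg_inv_left_right[OF assms(2)]
  have "\<iota> (inverse d) * alg_inv x * (\<iota> d * x) = (\<iota> (inverse d) * \<iota> d) * (alg_inv x * x)"
    by (metis complex_alg_struct_central mult.assoc)
  thus "\<iota> (inverse d) * alg_inv x * (\<iota> d * x) = 1" using d x by simp
  have "\<iota> d * x * (\<iota> (inverse d) * alg_inv x) = (\<iota> d * \<iota> (inverse d)) * (x * alg_inv x)"
    by (metis complex_alg_struct_central mult.assoc)
  thus "\<iota> d * x * (\<iota> (inverse d) * alg_inv x) = 1" using d x by simp
qed

lemma nonzero_if_alg_invertible_powi:
  assumes "N \<noteq> 0" and "alg_invertible (\<iota> (d powi N) * x)"
  shows "d \<noteq> 0"
proof
  assume "d = 0"
  hence "\<iota> (d powi N) * x = 0" using assms(1) by (simp add: complex_alg_struct_zero)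
  thus False using assms(2) unfolding alg_invertible_def by simp
qed

end

section \<open>Derivatives along symmetric directions\<close>

lemma has_vector_derivative_iff_difference_quotient:
  fixes f :: "real \<Rightarrow> 'b::real_normed_vector"
  shows "(f has_vector_derivative v) (at x) \<longleftrightarrow> ((\<lambda>t. (f t - f x) /\<^sub>R (t - x)) \<longlongrightarrow> v) (at x)"
proof -
  have "norm ((f t - f x - (t - x) *\<^sub>R v) /\<^sub>R norm (t - x)) = norm ((f t - f x) /\<^sub>R (t - x) - v)"
    if "t \<noteq> x" for t
  proof -
    have "(f t - f x) /\<^sub>R (t - x) - v = (f t - f x - (t - x) *\<^sub>R v) /\<^sub>R (t - x)"
      using that by (simp add: scaleR_right_diff_distrib)
    thus ?thesis by simp
  qed
  hence eq: "\<forall>\<^sub>F t in at x. norm ((f t - f x - (t - x) *\<^sub>R v) /\<^sub>R norm (t - x)) = norm ((f t - f x) /\<^sub>R (t - x) - v)"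
    unfolding eventually_at_filter by auto
  have "(f has_vector_derivative v) (at x) \<longleftrightarrow>
      ((\<lambda>t. (f t - f x - (t - x) *\<^sub>R v) /\<^sub>R norm (t - x)) \<longlongrightarrow> 0) (at x)"
    by (simp add: has_vector_derivative_def has_derivative_at_within bounded_linear_scaleR_left)
  also have "\<dots> \<longleftrightarrow> ((\<lambda>t. norm ((f t - f x - (t - x) *\<^sub>R v) /\<^sub>R norm (t - x))) \<longlongrightarrow> 0) (at x)"
    by (rule tendsto_norm_zero_iff[symmetric])
  also have "\<dots> \<longleftrightarrow> ((\<lambda>t. norm ((f t - f x) /\<^sub>R (t - x) - v)) \<longlongrightarrow> 0) (at x)"
    by (rule tendsto_cong[OF eq])
  also have "\<dots> \<longleftrightarrow> ((\<lambda>t. (f t - f x) /\<^sub>R (t - x)) \<longlongrightarrow> v) (at x)"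
    by (simp add: tendsto_norm_zero_iff LIM_zero_iff)
  finally show ?thesis .
qed

lemma has_derivative_compose_curve:
  assumes "(\<Phi> has_derivative \<Phi>') (at (c x) within S)"
    and "(c has_vector_derivative v) (at x)"
    and "open T" and "x \<in> T" and "c ` T \<subseteq> S"
  shows "((\<lambda>t. \<Phi> (c t)) has_vector_derivative \<Phi>' v) (at x)"
proof -
  have "(\<Phi> has_derivative \<Phi>') (at (c x) within c ` T)"
    using has_derivative_subset[OF assms(1,5)] .
  moreover have "(c has_derivative (\<lambda>s. s *\<^sub>R v)) (at x within T)"
    using assms(2) has_derivative_at_withinI unfolding has_vector_derivative_def by blast
  ultimately have "((\<lambda>t. \<Phi> (c t)) has_derivative (\<lambda>s. \<Phi>' (s *\<^sub>R v))) (at x within T)"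
    using has_derivative_in_compose by blast
  moreover have "\<Phi>' (s *\<^sub>R v) = s *\<^sub>R \<Phi>' v" for s
    using has_derivative_bounded_linear[OF assms(1)] by (simp add: linear_simps)
  ultimately show ?thesis
    using at_within_open[OF assms(4,3)] by (simp add: has_vector_derivative_def)
qed

lemma sym_mats_add: "A \<in> sym_mats \<Longrightarrow> B \<in> sym_mats \<Longrightarrow> A + B \<in> sym_mats"
  and sym_mats_scaleR: "A \<in> sym_mats \<Longrightarrow> c *\<^sub>R A \<in> sym_mats"
  and sym_mats_cscale: "A \<in> sym_mats \<Longrightarrow> cscale w A \<in> sym_mats"
  and symE_in_sym_mats: "symE i j \<in> sym_mats"
  by (auto simp: sym_mats_def vec_eq_iff transpose_def cscale_def symE_def)

lemma transpose_mult_mult_in_sym_mats: "A \<in> sym_mats \<Longrightarrow> transpose J ** A ** J \<in> sym_mats"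
  by (simp add: sym_mats_def matrix_transpose_mul matrix_mul_assoc)

lemma has_vector_derivative_along_sym_line:
  assumes "(\<Phi> has_derivative \<Phi>') (at Y within sym_mats)" and "Y \<in> sym_mats" and "H \<in> sym_mats"
  shows "((\<lambda>t. \<Phi> (Y + t *\<^sub>R H)) has_vector_derivative \<Phi>' H) (at 0)"
proof (rule has_derivative_compose_curve[where c = "\<lambda>t. Y + t *\<^sub>R H" and T = UNIV])
  show "((\<lambda>t. Y + t *\<^sub>R H) has_vector_derivative H) (at 0)"
    by (auto intro!: derivative_eq_intros)
qed (use assms in \<open>auto intro: sym_mats_add sym_mats_scaleR\<close>)

lemma partial_Z_eq_derivative:
  assumes "(\<Phi> has_derivative \<Phi>') (at Y within sym_mats)" and "Y \<in> sym_mats"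
  shows "partial_Z \<Phi> Y i j = \<Phi>' (symE i j)"
proof -
  have "((\<lambda>t. (\<Phi> (Y + t *\<^sub>R symE i j) - \<Phi> Y) /\<^sub>R t) \<longlongrightarrow> \<Phi>' (symE i j)) (at 0)"
    using has_vector_derivative_along_sym_line[OF assms symE_in_sym_mats]
    by (simp add: has_vector_derivative_iff_difference_quotient)
  thus ?thesis
    unfolding partial_Z_def by (intro tendsto_Lim) (auto simp: divide_inverse_commute)
qed

definition sym_unit :: "'g::finite \<Rightarrow> 'g \<Rightarrow> complex^'g^'g" where
  "sym_unit a b = (\<chi> k l. ((if k = a \<and> l = b then 1 else 0) + (if k = b \<and> l = a then 1 else 0)) / 2)"

lemma sym_unit_eq_cscale_symE: "sym_unit a b = cscale (if a = b then 1 else 1/2) (symE a b)"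
  by (auto simp: vec_eq_iff sym_unit_def cscale_def symE_def)

lemma sym_unit_in_sym_mats: "sym_unit a b \<in> sym_mats"
  unfolding sym_unit_eq_cscale_symE by (intro sym_mats_cscale symE_in_sym_mats)

text \<open>The factor 1/2 in the off-diagonal entries of D is what makes D(\<Phi>)_ij the derivative
  in the direction sym_unit i j = (E_ij + E_ji)/2.\<close>

lemma Dop_eq_derivative:
  assumes "complex_alg_struct \<iota>" and "(\<Phi> has_derivative \<Phi>') (at Y within sym_mats)"
    and "Y \<in> sym_mats" and "\<forall>c H. H \<in> sym_mats \<longrightarrow> \<Phi>' (cscale c H) = \<iota> c * \<Phi>' H"
  shows "Dop \<iota> \<Phi> Y $ i $ j = \<iota> (1 / (2 * pi * \<i>)) * \<Phi>' (sym_unit i j)"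
proof -
  have "\<Phi>' (sym_unit i j) = \<iota> (if i = j then 1 else 1/2) * \<Phi>' (symE i j)"
    unfolding sym_unit_eq_cscale_symE using assms(4) symE_in_sym_mats by blast
  thus ?thesis
    using complex_alg_struct_one[OF assms(1)]
    by (simp add: Dop_def partial_Z_eq_derivative[OF assms(2,3)] mult.assoc)
qed

lemma sum_mult_sym_unit_row:
  "(\<Sum>p\<in>UNIV. f p * sym_unit i j $ p $ q) = ((if q = j then f i else 0) + (if q = i then f j else 0)) / 2"
proof -
  have "(\<Sum>p\<in>UNIV. f p * sym_unit i j $ p $ q) =
      (\<Sum>p\<in>UNIV. (if p = i then (if q = j then f p else 0) else 0) + (if p = j then (if q = i then f p else 0) else 0)) / 2"
    unfolding sum_divide_distrib by (intro sum.cong refl) (auto simp: sym_unit_def add_divide_distrib)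
  also have "\<dots> = ((if q = j then f i else 0) + (if q = i then f j else 0)) / 2"
    by (simp only: sum.distrib sum.delta finite UNIV_I if_True)
  finally show ?thesis .
qed

lemma sum_mult_sym_unit_col:
  "(\<Sum>l\<in>UNIV. f l * sym_unit k l $ a $ b) = ((if a = k then f b else 0) + (if b = k then f a else 0)) / 2"
proof -
  have "(\<Sum>l\<in>UNIV. f l * sym_unit k l $ a $ b) =
      (\<Sum>l\<in>UNIV. (if l = b then (if a = k then f l else 0) else 0) + (if l = a then (if b = k then f l else 0) else 0)) / 2"
    unfolding sum_divide_distrib by (intro sum.cong refl) (auto simp: sym_unit_def add_divide_distrib)
  also have "\<dots> = ((if a = k then f b else 0) + (if b = k then f a else 0)) / 2"
    by (simp only: sum.distrib sum.delta finite UNIV_I if_True)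
  finally show ?thesis .
qed

lemma trace_mult_sym_unit: "trace (M ** sym_unit i j) = (M $ j $ i + M $ i $ j) / 2"
proof -
  have "trace (M ** sym_unit i j) = (\<Sum>k\<in>UNIV. ((if k = j then M $ k $ i else 0) + (if k = i then M $ k $ j else 0)) / 2)"
    unfolding trace_def matrix_matrix_mult_def vec_lambda_beta sum_mult_sym_unit_row ..
  also have "\<dots> = (M $ j $ i + M $ i $ j) / 2"
    by (simp only: sum_divide_distrib[symmetric] sum.distrib sum.delta finite UNIV_I if_True)
  finally show ?thesis .
qed

lemma transpose_mult_sym_unit_mult:
  fixes J :: "complex^'g::finite^'g"
  shows "transpose J ** sym_unit i j ** J = (\<Sum>k\<in>UNIV. \<Sum>l\<in>UNIV. cscale (J$i$k * J$j$l) (sym_unit k l))"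
  unfolding vec_eq_iff
proof (intro allI)
  fix a b
  have "(transpose J ** sym_unit i j ** J) $ a $ b =
      (\<Sum>q\<in>UNIV. ((if q = j then J $ i $ a else 0) + (if q = i then J $ j $ a else 0)) / 2 * J $ q $ b)"
    unfolding matrix_matrix_mult_def transpose_def vec_lambda_beta sum_mult_sym_unit_row ..
  also have "\<dots> = (\<Sum>q\<in>UNIV. (if q = j then J $ i $ a * J $ q $ b else 0) + (if q = i then J $ j $ a * J $ q $ b else 0)) / 2"
    unfolding sum_divide_distrib by (intro sum.cong refl) (simp add: distrib_right)
  also have "\<dots> = (J $ i $ a * J $ j $ b + J $ j $ a * J $ i $ b) / 2"
    by (simp only: sum.distrib sum.delta finite UNIV_I if_True)
  also have "\<dots> = (\<Sum>k\<in>UNIV. ((if a = k then J$i$k * J$j$b else 0) + (if b = k then J$i$k * J$j$a else 0)) / 2)"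
    unfolding sum_divide_distrib[symmetric]
    by (simp only: sum.distrib sum.delta' finite UNIV_I if_True) (simp add: mult.commute)
  also have "\<dots> = (\<Sum>k\<in>UNIV. \<Sum>l\<in>UNIV. cscale (J$i$k * J$j$l) (sym_unit k l)) $ a $ b"
    unfolding sum_component cscale_def vec_lambda_beta sum_mult_sym_unit_col ..
  finally show "(transpose J ** sym_unit i j ** J) $ a $ b = (\<Sum>k\<in>UNIV. \<Sum>l\<in>UNIV. cscale (J$i$k * J$j$l) (sym_unit k l)) $ a $ b" .
qed

lemma complex_linear_sum_cscale_sym_unit:
  assumes "complex_alg_struct \<iota>" and "linear D"
    and "\<forall>c H. H \<in> sym_mats \<longrightarrow> D (cscale c H) = \<iota> c * D H"
  shows "D (\<Sum>k\<in>UNIV. \<Sum>l\<in>UNIV. cscale (f k * g l) (sym_unit k l)) =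
    (\<Sum>k\<in>UNIV. \<Sum>l\<in>UNIV. \<iota> (f k) * D (sym_unit k l) * \<iota> (g l))"
proof -
  have "D (cscale (f k * g l) (sym_unit k l)) = \<iota> (f k) * D (sym_unit k l) * \<iota> (g l)" for k l
  proof -
    have "D (cscale (f k * g l) (sym_unit k l)) = \<iota> (f k * g l) * D (sym_unit k l)"
      using assms(3) sym_unit_in_sym_mats by blast
    thus ?thesis
      by (metis complex_alg_struct_mult[OF assms(1)] complex_alg_struct_central[OF assms(1)] mult.assoc)
  qed
  thus ?thesis by (simp add: linear_sum[OF assms(2)])
qed

section \<open>Differentiating the automorphy relation\<close>

lemma Jfac_line: "Jfac \<gamma> (Z + t *\<^sub>R H) = Jfac \<gamma> Z + t *\<^sub>R (blkC \<gamma> ** H)"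
  unfolding Jfac_def
  by (simp add: matrix_add_ldistrib matrix_scalar_ac scalar_matrix_assoc algebra_simps)

lemma sp_act_mult_Jfac:
  assumes "det (Jfac \<gamma> Z) \<noteq> 0"
  shows "sp_act \<gamma> Z ** Jfac \<gamma> Z = blkA \<gamma> ** Z + blkB \<gamma>"
  unfolding sp_act_def
  by (simp add: matrix_mul_assoc[symmetric] matrix_inv_det_nonzero[OF assms])

lemma sp_act_line_has_vector_derivative:
  assumes "det (Jfac \<gamma> Z) \<noteq> 0"
  shows "((\<lambda>t. sp_act \<gamma> (Z + t *\<^sub>R H)) has_vector_derivative
    (blkA \<gamma> - sp_act \<gamma> Z ** blkC \<gamma>) ** H ** matrix_inv (Jfac \<gamma> Z)) (at 0)"
proof -
  let ?A = "blkA \<gamma>" and ?B = "blkB \<gamma>" and ?C = "blkC \<gamma>"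
  define J W X where "J = Jfac \<gamma> Z" and "W = sp_act \<gamma> Z" and "X = ?A - W ** ?C"
  define J' where "J' t = J + t *\<^sub>R (?C ** H)" for t :: real
  have "(J' \<longlongrightarrow> J) (at 0)"
    unfolding J'_def by (auto intro!: tendsto_eq_intros)
  hence lim: "((\<lambda>t. X ** H ** matrix_inv (J' t)) \<longlongrightarrow> X ** H ** matrix_inv J) (at 0)"
    using assms unfolding J_def by (intro tendsto_matrix_mult_left tendsto_matrix_inv)
  have ev: "\<forall>\<^sub>F t in at 0. det (J' t) \<noteq> 0"
    using tendsto_imp_eventually_ne[OF tendsto_det[OF \<open>(J' \<longlongrightarrow> J) (at 0)\<close>]] assms
    unfolding J_def by blast
  have quot: "(sp_act \<gamma> (Z + t *\<^sub>R H) - W) /\<^sub>R t = X ** H ** matrix_inv (J' t)"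
    if "det (J' t) \<noteq> 0" and "t \<noteq> 0" for t
  proof -
    have "sp_act \<gamma> (Z + t *\<^sub>R H) ** J' t = ?A ** Z + ?B + t *\<^sub>R (?A ** H)"
      using sp_act_mult_Jfac[of \<gamma> "Z + t *\<^sub>R H"] that(1)
      by (simp add: Jfac_line J'_def J_def matrix_add_ldistrib matrix_scalar_ac scalar_matrix_assoc)
    moreover have "W ** J' t = ?A ** Z + ?B + t *\<^sub>R (W ** ?C ** H)"
      using sp_act_mult_Jfac[OF assms]
      by (simp add: J'_def J_def W_def matrix_add_ldistrib matrix_scalar_ac scalar_matrix_assoc
          matrix_mul_assoc)
    ultimately have "(sp_act \<gamma> (Z + t *\<^sub>R H) - W) ** J' t = t *\<^sub>R (X ** H)"
      by (simp add: X_def matrix_diff_rdistrib scaleR_diff_right matrix_mul_assoc)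
    hence "(sp_act \<gamma> (Z + t *\<^sub>R H) - W) ** J' t ** matrix_inv (J' t) = t *\<^sub>R (X ** H) ** matrix_inv (J' t)"
      by simp
    hence "sp_act \<gamma> (Z + t *\<^sub>R H) - W = t *\<^sub>R (X ** H ** matrix_inv (J' t))"
      by (simp add: matrix_mul_assoc[symmetric] matrix_inv_det_nonzero[OF that(1)] scalar_matrix_assoc)
    thus ?thesis using that(2) by simp
  qed
  have "((\<lambda>t. (sp_act \<gamma> (Z + t *\<^sub>R H) - W) /\<^sub>R (t - 0)) \<longlongrightarrow> X ** H ** matrix_inv J) (at 0)"
    by (rule Lim_transform_eventually[OF lim])
      (use ev in \<open>auto simp: eventually_at_filter quot elim: eventually_mono\<close>)
  thus ?thesis
    by (simp add: has_vector_derivative_iff_difference_quotient J_def W_def X_def)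
qed

lemma symplectic_sp_act_cocycle_inverse:
  fixes \<gamma> y :: "int^('g::finite+'g)^('g+'g)"
  assumes sp: "transpose \<gamma> ** Omega ** \<gamma> = Omega" "\<gamma> ** y = mat 1"
    and "Z \<in> sym_mats" and "sp_act \<gamma> Z \<in> sym_mats" and "det (Jfac \<gamma> Z) \<noteq> 0"
  shows "(blkA \<gamma> - sp_act \<gamma> Z ** blkC \<gamma>) ** transpose (Jfac \<gamma> Z) = mat 1"
proof -
  let ?A = "blkA \<gamma>" and ?B = "blkB \<gamma>" and ?C = "blkC \<gamma>" and ?D = "blkD \<gamma>"
  let ?J = "Jfac \<gamma> Z" and ?W = "sp_act \<gamma> Z"
  have sym: "transpose ?W = ?W" "transpose Z = Z" using assms(3,4) by (auto simp: sym_mats_def)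
  have JtW: "transpose ?J ** ?W = Z ** transpose ?A + transpose ?B"
  proof -
    have "transpose ?J ** ?W = transpose (?W ** ?J)"
      by (simp add: matrix_transpose_mul sym)
    thus ?thesis
      unfolding sp_act_mult_Jfac[OF assms(5)] by (simp add: transpose_add matrix_transpose_mul sym)
  qed
  have tJ: "transpose ?J = Z ** transpose ?C + transpose ?D"
    unfolding Jfac_def by (simp add: transpose_add matrix_transpose_mul sym)
  have "transpose ?J ** (?A - ?W ** ?C) = transpose ?J ** ?A - (transpose ?J ** ?W) ** ?C"
    by (simp add: matrix_diff_ldistrib matrix_mul_assoc)
  also have "\<dots> = Z ** (transpose ?C ** ?A) + transpose ?D ** ?A - (Z ** (transpose ?A ** ?C) + transpose ?B ** ?C)"
    unfolding JtW unfolding tJ by (simp add: matrix_add_rdistrib matrix_mul_assoc)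
  also have "\<dots> = mat 1"
    using symplectic_blocks(1,2)[OF sp] by simp
  finally show ?thesis using matrix_left_right_inverse by blast
qed

lemma symplectic_Jfac_mult_transpose_blkC_symmetric:
  fixes \<gamma> y :: "int^('g::finite+'g)^('g+'g)"
  assumes "transpose \<gamma> ** Omega ** \<gamma> = Omega" "\<gamma> ** y = mat 1" and "Z \<in> sym_mats"
  shows "transpose (Jfac \<gamma> Z ** transpose (blkC \<gamma>)) = Jfac \<gamma> Z ** transpose (blkC \<gamma>)"
proof -
  have "Jfac \<gamma> Z ** transpose (blkC \<gamma>) = blkC \<gamma> ** Z ** transpose (blkC \<gamma>) + blkD \<gamma> ** transpose (blkC \<gamma>)"
    unfolding Jfac_def by (simp add: matrix_add_rdistrib)
  thus ?thesis
    using symplectic_blocks(3)[OF assms(1,2)] assms(3)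
    by (simp add: sym_mats_def transpose_add matrix_transpose_mul matrix_mul_assoc)
qed

lemma automorphy_derivative:
  fixes \<gamma> y :: "int^('g::finite+'g)^('g+'g)"
    and \<Phi> :: "complex^'g^'g \<Rightarrow> 'a::real_normed_algebra_1"
  assumes \<iota>: "complex_alg_struct \<iota>"
    and U: "openin (top_of_set sym_mats) U" "\<forall>Y\<in>U. sp_act \<gamma> Y \<in> U" "\<forall>Y\<in>U. det (Jfac \<gamma> Y) \<noteq> 0"
    and feq: "\<forall>Y\<in>U. \<Phi> (sp_act \<gamma> Y) = \<iota> (det (Jfac \<gamma> Y) powi N) * \<Phi> Y"
    and sp: "transpose \<gamma> ** Omega ** \<gamma> = Omega" "\<gamma> ** y = mat 1"
    and Z: "Z \<in> U" and V: "V \<in> sym_mats"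
    and dW: "(\<Phi> has_derivative DW) (at (sp_act \<gamma> Z) within sym_mats)"
    and dZ: "(\<Phi> has_derivative DZ) (at Z within sym_mats)"
  shows "DW V = \<iota> (det (Jfac \<gamma> Z) powi N) * DZ (transpose (Jfac \<gamma> Z) ** V ** Jfac \<gamma> Z)
    + \<iota> (of_int N * trace (blkC \<gamma> ** transpose (Jfac \<gamma> Z) ** V) * det (Jfac \<gamma> Z) powi N) * \<Phi> Z"
proof -
  define J C H where "J = Jfac \<gamma> Z" and "C = blkC \<gamma>" and "H = transpose J ** V ** J"
  obtain Op where Op: "open Op" "U = sym_mats \<inter> Op" using U(1) unfolding openin_open by blast
  define T where "T = (\<lambda>t::real. Z + t *\<^sub>R H) -` Op"
  have Zs: "Z \<in> sym_mats" and Ws: "sp_act \<gamma> Z \<in> sym_mats" and dJ: "det J \<noteq> 0"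
    using Z U(2,3) Op(2) unfolding J_def by auto
  have Hs: "H \<in> sym_mats" unfolding H_def by (rule transpose_mult_mult_in_sym_mats[OF V])
  have T: "open T" "0 \<in> T"
    using Op Z unfolding T_def by (auto intro!: continuous_open_vimage continuous_intros)
  have inU: "Z + t *\<^sub>R H \<in> U" if "t \<in> T" for t
    using that Zs Hs Op(2) unfolding T_def by (auto intro: sym_mats_add sym_mats_scaleR)
  have velocity: "(blkA \<gamma> - sp_act \<gamma> Z ** blkC \<gamma>) ** H ** matrix_inv (Jfac \<gamma> Z) = V"
  proof -
    have "(blkA \<gamma> - sp_act \<gamma> Z ** blkC \<gamma>) ** transpose J = mat 1"
      unfolding J_def by (rule symplectic_sp_act_cocycle_inverse[OF sp Zs Ws dJ[unfolded J_def]])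
    thus ?thesis
      unfolding H_def J_def[symmetric]
      by (metis matrix_mul_assoc matrix_mul_lid matrix_mul_rid matrix_inv_det_nonzero(1)[OF dJ])
  qed
  have curve: "((\<lambda>t. sp_act \<gamma> (Z + t *\<^sub>R H)) has_vector_derivative V) (at 0)"
    using sp_act_line_has_vector_derivative[OF dJ[unfolded J_def], of H] unfolding velocity .
  have "(\<Phi> has_derivative DW) (at (sp_act \<gamma> (Z + 0 *\<^sub>R H)) within sym_mats)"
    using dW by simp
  hence lhs: "((\<lambda>t. \<Phi> (sp_act \<gamma> (Z + t *\<^sub>R H))) has_vector_derivative DW V) (at 0)"
    by (rule has_derivative_compose_curve[OF _ curve T]) (use U(2) inU Op(2) in auto)
  have rhs: "((\<lambda>t. \<iota> (det (J + t *\<^sub>R (C ** H)) powi N) * \<Phi> (Z + t *\<^sub>R H)) has_vector_derivative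
      \<iota> (det J powi N) * DZ H + \<iota> (of_int N * trace (matrix_inv J ** (C ** H)) * det J powi N) * \<Phi> Z) (at 0)"
    using has_vector_derivative_mult[OF
        bounded_linear.has_vector_derivative[OF complex_alg_struct_bounded_linear[OF \<iota>]
          det_powi_line_has_vector_derivative[OF dJ]]
        has_vector_derivative_along_sym_line[OF dZ Zs Hs]]
    by simp
  have "\<Phi> (sp_act \<gamma> (Z + t *\<^sub>R H)) = \<iota> (det (J + t *\<^sub>R (C ** H)) powi N) * \<Phi> (Z + t *\<^sub>R H)"
    if "t \<in> T" for t
    using feq inU[OF that] unfolding J_def C_def by (simp add: Jfac_line)
  hence "DW V = \<iota> (det J powi N) * DZ H + \<iota> (of_int N * trace (matrix_inv J ** (C ** H)) * det J powi N) * \<Phi> Z"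
    using vector_derivative_unique_at[OF has_vector_derivative_transform_within_open[OF lhs T] rhs]
    by simp
  moreover have "trace (matrix_inv J ** (C ** H)) = trace (C ** transpose J ** V)"
    using trace_mul_sym[of "matrix_inv J ** (C ** transpose J ** V)" J]
    by (simp add: H_def matrix_mul_assoc matrix_inv_det_nonzero[OF dJ])
  ultimately show ?thesis unfolding J_def C_def H_def by simp
qed

lemma Dop_sp_act:
  fixes \<gamma> y :: "int^('g::finite+'g)^('g+'g)"
    and \<Phi> :: "complex^'g^'g \<Rightarrow> 'a::real_normed_algebra_1"
  assumes \<iota>: "complex_alg_struct \<iota>"
    and U: "openin (top_of_set sym_mats) U" "\<forall>Y\<in>U. sp_act \<gamma> Y \<in> U" "\<forall>Y\<in>U. det (Jfac \<gamma> Y) \<noteq> 0"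
    and feq: "\<forall>Y\<in>U. \<Phi> (sp_act \<gamma> Y) = \<iota> (det (Jfac \<gamma> Y) powi N) * \<Phi> Y"
    and sp: "transpose \<gamma> ** Omega ** \<gamma> = Omega" "\<gamma> ** y = mat 1"
    and Z: "Z \<in> U" and holo: "holo_at \<iota> \<Phi> (sp_act \<gamma> Z)" "holo_at \<iota> \<Phi> Z"
  shows "Dop \<iota> \<Phi> (sp_act \<gamma> Z) $ i $ j =
      \<iota> (det (Jfac \<gamma> Z) powi N) *
        (\<Sum>k\<in>UNIV. \<Sum>l\<in>UNIV. \<iota> (Jfac \<gamma> Z $ i $ k) * Dop \<iota> \<Phi> Z $ k $ l * \<iota> (Jfac \<gamma> Z $ j $ l))
      + \<iota> (of_int N * (Jfac \<gamma> Z ** transpose (blkC \<gamma>)) $ i $ j * det (Jfac \<gamma> Z) powi N / (2 * pi * \<i>))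
        * \<Phi> Z"
proof -
  define J C d c where "J = Jfac \<gamma> Z" and "C = blkC \<gamma>" and "d = det J powi N"
    and "c = 1 / (2 * pi * \<i>)"
  obtain DW where dW: "(\<Phi> has_derivative DW) (at (sp_act \<gamma> Z) within sym_mats)"
    and hW: "\<forall>c H. H \<in> sym_mats \<longrightarrow> DW (cscale c H) = \<iota> c * DW H"
    using holo(1) unfolding holo_at_def by blast
  obtain DZ where dZ: "(\<Phi> has_derivative DZ) (at Z within sym_mats)"
    and hZ: "\<forall>c H. H \<in> sym_mats \<longrightarrow> DZ (cscale c H) = \<iota> c * DZ H"
    using holo(2) unfolding holo_at_def by blast
  have Zs: "Z \<in> sym_mats" and Ws: "sp_act \<gamma> Z \<in> sym_mats"
    using Z U(1,2) openin_imp_subset by fastforce+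
  let ?S = "\<Sum>k\<in>UNIV. \<Sum>l\<in>UNIV. \<iota> (J $ i $ k) * DZ (sym_unit k l) * \<iota> (J $ j $ l)"
  have "DZ (transpose J ** sym_unit i j ** J) = ?S"
    unfolding transpose_mult_sym_unit_mult
    using complex_linear_sum_cscale_sym_unit[OF \<iota> has_derivative_linear[OF dZ] hZ] .
  moreover have "trace (C ** transpose J ** sym_unit i j) = (J ** transpose C) $ i $ j"
  proof -
    have JC: "transpose (J ** transpose C) = J ** transpose C"
      unfolding J_def C_def by (rule symplectic_Jfac_mult_transpose_blkC_symmetric[OF sp Zs])
    hence "C ** transpose J = J ** transpose C" by (simp add: matrix_transpose_mul)
    moreover have "(J ** transpose C) $ j $ i = (J ** transpose C) $ i $ j"
      using JC by (metis transpose_def vec_lambda_beta)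
    ultimately show ?thesis by (simp add: trace_mult_sym_unit)
  qed
  ultimately have "DW (sym_unit i j) = \<iota> d * ?S + \<iota> (of_int N * (J ** transpose C) $ i $ j * d) * \<Phi> Z"
    using automorphy_derivative[OF \<iota> U feq sp Z sym_unit_in_sym_mats dW dZ]
    unfolding J_def C_def d_def by simp
  hence "Dop \<iota> \<Phi> (sp_act \<gamma> Z) $ i $ j =
      \<iota> c * (\<iota> d * ?S + \<iota> (of_int N * (J ** transpose C) $ i $ j * d) * \<Phi> Z)"
    unfolding c_def by (simp add: Dop_eq_derivative[OF \<iota> dW Ws hW])
  also have "\<dots> = \<iota> d * (\<iota> c * ?S) + \<iota> (c * (of_int N * (J ** transpose C) $ i $ j * d)) * \<Phi> Z"
    unfolding distrib_left complex_alg_struct_left_commute[OF \<iota>, of "\<iota> c"]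
    by (simp only: mult.assoc[symmetric] complex_alg_struct_mult[OF \<iota>, symmetric]) (simp add: mult_ac)
  also have "\<iota> c * ?S =
      (\<Sum>k\<in>UNIV. \<Sum>l\<in>UNIV. \<iota> (J $ i $ k) * (\<iota> c * DZ (sym_unit k l)) * \<iota> (J $ j $ l))"
    by (simp only: sum_distrib_left complex_alg_struct_sandwich[OF \<iota>])
  finally show ?thesis
    unfolding J_def C_def d_def c_def by (simp add: Dop_eq_derivative[OF \<iota> dZ Zs hZ])
qed

lemma A_Phi_transform:
  fixes \<Phi> :: "complex^'g::finite^'g \<Rightarrow> 'a::real_normed_algebra_1"
  assumes \<iota>: "complex_alg_struct \<iota>" and "N \<noteq> 0" and "d \<noteq> 0"
    and inv: "alg_invertible (\<Phi> Z)" and feq: "\<Phi> W = \<iota> d * \<Phi> Z"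
    and Dop: "Dop \<iota> \<Phi> W $ i $ j =
      \<iota> d * (\<Sum>k\<in>UNIV. \<Sum>l\<in>UNIV. \<iota> (J $ i $ k) * Dop \<iota> \<Phi> Z $ k $ l * \<iota> (J $ j $ l))
      + \<iota> (of_int N * T * d / (2 * pi * \<i>)) * \<Phi> Z"
  shows "A_Phi \<iota> e N \<Phi> W $ i $ j =
    (\<Sum>k\<in>UNIV. \<Sum>l\<in>UNIV. \<iota> (J $ i $ k) * A_Phi \<iota> e N \<Phi> Z $ k $ l * \<iota> (J $ j $ l))
    + \<iota> (2 * e / (2 * pi * \<i>) * T)"
proof -
  let ?P = "alg_inv (\<Phi> Z)" and ?k = "2 * e / of_int N" and ?c = "of_int N * T * d / (2 * pi * \<i>)"
  let ?S = "\<Sum>k\<in>UNIV. \<Sum>l\<in>UNIV. \<iota> (J $ i $ k) * Dop \<iota> \<Phi> Z $ k $ l * \<iota> (J $ j $ l)"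
  have d: "\<iota> (inverse d) * \<iota> d = 1"
    using complex_alg_struct_inverse[OF \<iota> assms(3)] .
  have "\<iota> (inverse d) * ?P * (\<iota> d * ?S) = \<iota> (inverse d) * \<iota> d * (?P * ?S)"
    by (simp only: mult.assoc complex_alg_struct_left_commute[OF \<iota>, of ?P])
  moreover have "\<iota> (inverse d) * ?P * (\<iota> ?c * \<Phi> Z) = \<iota> (inverse d) * \<iota> ?c * (?P * \<Phi> Z)"
    by (simp only: mult.assoc complex_alg_struct_left_commute[OF \<iota>, of ?P])
  ultimately have "alg_inv (\<Phi> W) * Dop \<iota> \<Phi> W $ i $ j = ?P * ?S + \<iota> (inverse d) * \<iota> ?c"
    unfolding feq Dop alg_inv_complex_alg_struct_mult[OF \<iota> assms(3) inv] distrib_left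
    by (simp add: d alg_inv_left_right(1)[OF inv])
  hence "A_Phi \<iota> e N \<Phi> W $ i $ j = \<iota> ?k * (?P * ?S) + \<iota> (?k * (inverse d * ?c))"
    by (simp only: A_Phi_def vec_lambda_beta distrib_left complex_alg_struct_mult[OF \<iota>])
  also have "\<iota> ?k * (?P * ?S) =
      (\<Sum>k\<in>UNIV. \<Sum>l\<in>UNIV. \<iota> (J $ i $ k) * A_Phi \<iota> e N \<Phi> Z $ k $ l * \<iota> (J $ j $ l))"
    by (simp only: A_Phi_def vec_lambda_beta sum_distrib_left complex_alg_struct_sandwich[OF \<iota>])
  also have "?k * (inverse d * ?c) = 2 * e / (2 * pi * \<i>) * T"
    using assms(2,3) by (simp add: field_simps)
  finally show ?thesis .
qed

theorem mainTheorem19: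
  fixes \<Gamma> :: "(int^('g::finite+'g)^('g+'g)) set"
    and \<iota> :: "complex \<Rightarrow> 'a::real_normed_algebra_1"
    and e :: complex and N :: int
    and \<Phi> :: "complex^'g^'g \<Rightarrow> 'a"
    and U :: "(complex^'g^'g) set"
  assumes "congruence_subgroup \<Gamma>"
    and "complex_alg_struct \<iota>"
    and "e \<noteq> 0" and "N \<noteq> 0"
    and "U \<subseteq> siegel_H" and "openin (top_of_set sym_mats) U"
    and "\<forall>\<gamma>\<in>\<Gamma>. \<forall>Z\<in>U. sp_act \<gamma> Z \<in> U"
    and "\<forall>Z\<in>U. holo_at \<iota> \<Phi> Z"
    and "\<forall>Z\<in>U. alg_invertible (\<Phi> Z)"
    and "\<forall>\<gamma>\<in>\<Gamma>. \<forall>Z\<in>U. \<Phi> (sp_act \<gamma> Z) = \<iota> (det (Jfac \<gamma> Z) powi N) * \<Phi> Z"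
  shows "\<forall>\<gamma>\<in>\<Gamma>. \<forall>Z\<in>U. \<forall>i j.
           A_Phi \<iota> e N \<Phi> (sp_act \<gamma> Z) $ i $ j =
             (\<Sum>k\<in>UNIV. \<Sum>l\<in>UNIV. \<iota> (Jfac \<gamma> Z $ i $ k) * A_Phi \<iota> e N \<Phi> Z $ k $ l * \<iota> (Jfac \<gamma> Z $ j $ l))
             + \<iota> (2 * e / (2 * pi * \<i>) * (Jfac \<gamma> Z ** transpose (blkC \<gamma>)) $ i $ j)"
proof (intro ballI allI)
  fix \<gamma> Z i j assume \<gamma>: "\<gamma> \<in> \<Gamma>" and Z: "Z \<in> U"
  have "is_subgroup_Sp \<Gamma>" using assms(1) unfolding congruence_subgroup_def by blast
  then obtain y where sp: "transpose \<gamma> ** Omega ** \<gamma> = Omega" "\<gamma> ** y = mat 1"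
    using \<gamma> unfolding is_subgroup_Sp_def Sp_Z_def by blast
  have U: "\<forall>Y\<in>U. sp_act \<gamma> Y \<in> U"
    and feq: "\<forall>Y\<in>U. \<Phi> (sp_act \<gamma> Y) = \<iota> (det (Jfac \<gamma> Y) powi N) * \<Phi> Y"
    and holo: "holo_at \<iota> \<Phi> (sp_act \<gamma> Z)" "holo_at \<iota> \<Phi> Z"
    using assms(7,8,10) \<gamma> Z by blast+
  have det: "\<forall>Y\<in>U. det (Jfac \<gamma> Y) \<noteq> 0"
    using nonzero_if_alg_invertible_powi[OF assms(2,4)] feq U assms(9) by metis
  hence "det (Jfac \<gamma> Z) powi N \<noteq> 0" using Z by simp
  show "A_Phi \<iota> e N \<Phi> (sp_act \<gamma> Z) $ i $ j =
      (\<Sum>k\<in>UNIV. \<Sum>l\<in>UNIV. \<iota> (Jfac \<gamma> Z $ i $ k) * A_Phi \<iota> e N \<Phi> Z $ k $ l * \<iota> (Jfac \<gamma> Z $ j $ l))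
      + \<iota> (2 * e / (2 * pi * \<i>) * (Jfac \<gamma> Z ** transpose (blkC \<gamma>)) $ i $ j)"
    using Z assms(9) feq
    by (intro A_Phi_transform[OF assms(2,4) \<open>det (Jfac \<gamma> Z) powi N \<noteq> 0\<close>
        _ _ Dop_sp_act[OF assms(2,6) U det feq sp Z holo]]) auto
qed

end
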